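(* Let $t\ge 2$. Every $\mathbb{F}_q$-linear set of pseudoregulus type of the projective line $\Lambda=PG(1,q^t)$ is mapped by some element of $PGL(2,q^t)$ onto the linear set $\{\langle(x,x^q)\rangle_{q^t}:x\in\mathbb{F}_{q^t}^*\}=\{\langle(1,a)\rangle_{q^t}: a\in\mathbb{F}_{q^t}^*,\ N_{q^t/q}(a)=1\}$. In particular all $\mathbb{F}_q$-linear sets of pseudoregulus type of $PG(1,q^t)$ are projectively equivalent.
   Context: Let $\Lambda=PG(V,\mathbb{F}_{q^t})=PG(1,q^t)$ with $V$ a 2-dimensional $\mathbb{F}_{q^t}$-space; $\langle\mathbf u\rangle_{q^t}$ denotes the point defined by $\mathbf u\ne\mathbf 0$. Definition: given two distinct points $P_1=\langle\mathbf w\rangle_{q^t}$, $P_2=\langle\mathbf v\rangle_{q^t}$ of $\Lambda$, an automorphism $\tau$ of $\mathbb{F}_{q^t}$ with $\mathrm{Fix}(\tau)=\mathbb{F}_q$, and $\rho\in\mathbb{F}_{q^t}^*$, the set $L_{\rho,\tau}=\{\langle\lambda\mathbf w+\rho\lambda^\tau\mathbf v\rangle_{q^t}:\lambda\in\mathbb{F}_{q^t}^*\}$ is called an $\mathbb{F}_q$-linear set of pseudoregulus type of $\Lambda$, with transversal points $P_1,P_2$. $N_{q^t/q}$ denotes the norm from $\mathbb{F}_{q^t}$ to $\mathbb{F}_q$, and coordinates are with respect to a fixed basis of $V$. *)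

theory Defs
  imports Main
begin

text \<open>Vectors of V = F_{q^t}^2 are pairs over a finite field 'a; CARD('a) = q^t.\<close>

definition smultv :: "'a::field \<Rightarrow> 'a \<times> 'a \<Rightarrow> 'a \<times> 'a" where
  "smultv c u = (c * fst u, c * snd u)"

definition addv :: "'a::field \<times> 'a \<Rightarrow> 'a \<times> 'a \<Rightarrow> 'a \<times> 'a" where
  "addv u w = (fst u + fst w, snd u + snd w)"

definition ppt :: "'a::field \<times> 'a \<Rightarrow> ('a \<times> 'a) set" where
  "ppt u = {smultv c u | c. c \<noteq> 0}"

definition subF :: "nat \<Rightarrow> 'a::field set" where
  "subF q = {x. x ^ q = x}"

definition field_aut :: "('a::field \<Rightarrow> 'a) \<Rightarrow> bool" where
  "field_aut f \<longleftrightarrow> bij f \<and> (\<forall>x y. f (x + y) = f x + f y) \<and>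
     (\<forall>x y. f (x * y) = f x * f y) \<and> f 1 = 1"

definition Fix :: "('a \<Rightarrow> 'a) \<Rightarrow> 'a set" where
  "Fix f = {x. f x = x}"

definition linset_pr :: "'a::field \<times> 'a \<Rightarrow> 'a \<times> 'a \<Rightarrow> 'a \<Rightarrow> ('a \<Rightarrow> 'a) \<Rightarrow> ('a \<times> 'a) set set" where
  "linset_pr w v \<rho> \<tau> = {ppt (addv (smultv l w) (smultv (\<rho> * \<tau> l) v)) | l. l \<noteq> 0}"

definition pseudoregulus :: "nat \<Rightarrow> ('a::field \<times> 'a) set set \<Rightarrow> bool" where
  "pseudoregulus q L \<longleftrightarrow> (\<exists>w v \<rho> \<tau>. w \<noteq> (0,0) \<and> v \<noteq> (0,0) \<and> ppt w \<noteq> ppt v \<and>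
      field_aut \<tau> \<and> Fix \<tau> = subF q \<and> \<rho> \<noteq> 0 \<and> L = linset_pr w v \<rho> \<tau>)"

text \<open>2x2 matrices (a,b,c,d) = [[a,b],[c,d]] acting on column vectors; PGL(2,q^t) elements
  are represented by invertible matrices.\<close>
type_synonym 'a mat2 = "'a \<times> 'a \<times> 'a \<times> 'a"

definition mat_app :: "'a::field mat2 \<Rightarrow> 'a \<times> 'a \<Rightarrow> 'a \<times> 'a" where
  "mat_app M u = (case M of (a, b, c, d) \<Rightarrow> (a * fst u + b * snd u, c * fst u + d * snd u))"

definition invertible2 :: "'a::field mat2 \<Rightarrow> bool" where
  "invertible2 M = (case M of (a, b, c, d) \<Rightarrow> a * d - b * c \<noteq> 0)"

definition pimage :: "'a::field mat2 \<Rightarrow> ('a \<times> 'a) set set \<Rightarrow> ('a \<times> 'a) set set" where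
  "pimage M L = {ppt (mat_app M u) | u. u \<noteq> (0,0) \<and> ppt u \<in> L}"

definition normF :: "nat \<Rightarrow> nat \<Rightarrow> 'a::field \<Rightarrow> 'a" where
  "normF q t a = (\<Prod>i<t. a ^ (q ^ i))"

end

theory Submission imports Defs "HOL-Computational_Algebra.Polynomial" begin

(* Let F be the field with q^t elements and N = {a. N(a) = 1} its norm-1 group, which is
   the group of roots of unity of order S = 1 + q + ... + q^(t-1) = (q^t - 1)/(q - 1).
   The arithmetic core (mult_hom_image_norm1) is: every multiplicative map on F* with
   kernel F_q* has image exactly N.  Indeed the image has (q^t - 1)/(q - 1) = S elements
   (F_q* has q - 1 elements, card_subF_units), so by Lagrange it consists of roots of
   unity of order S, and there are at most S of those.  This applies to x |-> x^(q-1)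
   and to l |-> l^tau / l (a form of Hilbert 90).

   Geometrically, a projectivity sending the transversal points <w>, <v> to <(1,0)>,
   <(0,1)> and absorbing rho maps <l w + rho l^tau v> to <(l, l^tau)> = <(1, l^tau / l)>;
   likewise <(x, x^q)> = <(1, x^(q-1))>.  So both the given pseudoregulus and the set
   {<(x, x^q)>} are mapped onto {<(1, a)> | a in N} (pseudoregulus_normal_form,
   frobenius_points), and composing one such projectivity with the adjugate of another
   gives the projective equivalence of any two pseudoreguli. *)

lemma card_roots_of_unity_le:
  assumes "n \<ge> 1"
  shows "card {x :: 'a::field. x ^ n = 1} \<le> n"
proof -
  define p :: "'a poly" where "p = monom 1 n - 1"
  have "degree (- 1 :: 'a poly) < degree (monom (1::'a) n)"
    using assms by (simp add: degree_monom_eq)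
  moreover have "p = monom 1 n + (- 1)" by (simp add: p_def)
  ultimately have deg: "degree p = n"
    by (metis degree_add_eq_left degree_monom_eq one_neq_zero)
  have "p \<noteq> 0" using deg assms by auto
  moreover have "{x. x ^ n = 1} = {x. poly p x = 0}" by (auto simp: p_def poly_monom)
  ultimately show ?thesis using card_poly_roots_bound[of p] deg by simp
qed

lemma power_card_eq_one:
  fixes H :: "'a::field set"
  assumes fin: "finite H" and nz: "0 \<notin> H" and h: "h \<in> H"
    and closed: "\<And>g. g \<in> H \<Longrightarrow> h * g \<in> H"
  shows "h ^ card H = 1"
proof -
  have inj: "inj_on ((*) h) H" using h nz by (auto simp: inj_on_def)
  have "(*) h ` H = H"
    using card_subset_eq[OF fin] closed card_image[OF inj] by blast
  then have "prod id H = prod ((*) h) H" using prod.reindex[OF inj] by simp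
  also have "\<dots> = h ^ card H * prod id H" by (simp add: prod.distrib)
  finally have "prod id H * 1 = prod id H * h ^ card H" by simp
  moreover have "prod id H \<noteq> 0" using fin nz by simp
  ultimately show ?thesis by (metis mult_left_cancel)
qed

text \<open>For a multiplicative map on the nonzero elements of a finite field, all fibres have the
  size of the kernel, so the group of units splits as image times kernel.\<close>
lemma card_units_image_kernel:
  fixes f :: "'a::{field,finite} \<Rightarrow> 'a"
  assumes mult: "\<And>x y. x \<noteq> 0 \<Longrightarrow> y \<noteq> 0 \<Longrightarrow> f (x * y) = f x * f y"
    and nz: "\<And>x. x \<noteq> 0 \<Longrightarrow> f x \<noteq> 0"
  shows "card (UNIV - {0::'a}) = card (f ` (UNIV - {0})) * card {x. x \<noteq> 0 \<and> f x = 1}"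
proof -
  let ?K = "{x. x \<noteq> 0 \<and> f x = 1}"
  let ?fibre = "\<lambda>y. {x. x \<noteq> 0 \<and> f x = y}"
  have fibre: "?fibre (f x0) = (*) x0 ` ?K" if x0: "x0 \<noteq> 0" for x0
  proof (intro equalityI subsetI)
    fix x assume "x \<in> ?fibre (f x0)"
    then have x: "x \<noteq> 0" "f x0 * f (x / x0) = f x0" using mult[of x0 "x / x0"] x0 by auto
    then have "x / x0 \<in> ?K" using x0 nz[OF x0] by simp
    moreover have "x = x0 * (x / x0)" using x0 by simp
    ultimately show "x \<in> (*) x0 ` ?K" by blast
  next
    fix x assume "x \<in> (*) x0 ` ?K"
    then show "x \<in> ?fibre (f x0)" using x0 mult by auto
  qed
  have "card (UNIV - {0::'a}) = card (\<Union> (?fibre ` f ` (UNIV - {0})))"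
    by (rule arg_cong[where f = card]) auto
  also have "\<dots> = (\<Sum>y\<in>f ` (UNIV - {0}). card (?fibre y))" by (rule card_UN_disjoint) auto
  also have "\<dots> = (\<Sum>y\<in>f ` (UNIV - {0}). card ?K)"
  proof (rule sum.cong)
    fix y assume "y \<in> f ` (UNIV - {0})"
    then obtain x0 where "x0 \<noteq> 0" "y = f x0" by auto
    moreover have "inj_on ((*) x0) ?K" using \<open>x0 \<noteq> 0\<close> by (auto simp: inj_on_def)
    ultimately show "card (?fibre y) = card ?K" using fibre by (simp add: card_image)
  qed simp
  finally show ?thesis by simp
qed

lemma geometric_sum_nat:
  assumes "(q::nat) \<ge> 1"
  shows "(\<Sum>i<t. q ^ i) * (q - 1) = q ^ t - 1"
proof (induction t)
  case (Suc t)
  have "(\<Sum>i<Suc t. q ^ i) * (q - 1) = q ^ t - 1 + q ^ t * (q - 1)"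
    using Suc by (simp add: algebra_simps)
  also have "\<dots> = q ^ Suc t - 1" using assms by (simp add: algebra_simps diff_mult_distrib2)
  finally show ?case .
qed simp

lemma sum_powers_ge_1:
  assumes "t \<ge> 1"
  shows "(\<Sum>i<t. (q::nat) ^ i) \<ge> 1"
  using member_le_sum[of 0 "{..<t}" "(^) q"] assms by simp

lemma field_card_base_ge_2:
  assumes card: "card (UNIV :: 'a::{field,finite} set) = q ^ t" and t: "t \<ge> 1"
  shows "q \<ge> 2"
proof (rule ccontr)
  assume "\<not> q \<ge> 2"
  then have "q = 0 \<or> q = 1" by auto
  then have "card (UNIV :: 'a set) \<le> 1" using card t by (auto simp: zero_power)
  moreover have "card {0::'a, 1} \<le> card (UNIV :: 'a set)" by (rule card_mono) auto
  ultimately show False by simp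
qed

lemma card_units:
  assumes card: "card (UNIV :: 'a::{field,finite} set) = q ^ t" and t: "t \<ge> 1"
  shows "card (UNIV - {0::'a}) = (\<Sum>i<t. q ^ i) * (q - 1)"
  using card geometric_sum_nat[of q t] field_card_base_ge_2[OF card t]
  by (simp add: card_Diff_singleton)

text \<open>The elements of norm 1 over \<open>F_q\<close>.  Since \<open>N(a) = a ^ (1 + q + ... + q^(t-1))\<close>, they are
  the roots of unity of that order.\<close>
definition norm1 :: "nat \<Rightarrow> nat \<Rightarrow> 'a::field set" where
  "norm1 q t = {a. a \<noteq> 0 \<and> normF q t a = 1}"

lemma norm1_eq_roots:
  assumes "t \<ge> 1"
  shows "norm1 q t = {a :: 'a::field. a ^ (\<Sum>i<t. q ^ i) = 1}"
proof -
  have "(\<Sum>i<t. q ^ i) \<noteq> 0" using sum_powers_ge_1[OF assms, of q] by linarith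
  then have "a \<noteq> 0" if "a ^ (\<Sum>i<t. q ^ i) = 1" for a :: 'a
    using that by (metis power_0_left zero_neq_one)
  then show ?thesis unfolding norm1_def normF_def by (auto simp: power_sum)
qed

lemma card_norm1_le:
  assumes "t \<ge> 1"
  shows "card (norm1 q t :: 'a::field set) \<le> (\<Sum>i<t. q ^ i)"
  unfolding norm1_eq_roots[OF assms] by (intro card_roots_of_unity_le sum_powers_ge_1 assms)

lemma power_map_kernel:
  assumes "q \<ge> 1"
  shows "{x :: 'a::field. x \<noteq> 0 \<and> x ^ (q - 1) = 1} = subF q - {0}"
proof -
  have "x ^ q = x * x ^ (q - 1)" for x :: 'a using assms by (cases q) auto
  then show ?thesis unfolding subF_def by auto
qed

text \<open>The upper bound holds since they are
  roots of \<open>x ^ (q - 1) = 1\<close>; the lower bound since \<open>x \<mapsto> x ^ (q - 1)\<close> has kernel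
  \<open>F_q\<^sup>*\<close> and lands in the norm-1 group, which has at most \<open>(q ^ t - 1) / (q - 1)\<close> elements.\<close>
lemma card_subF_units:
  assumes card: "card (UNIV :: 'a::{field,finite} set) = q ^ t" and t: "t \<ge> 1"
  shows "card (subF q - {0::'a}) = q - 1"
proof -
  define S where "S = (\<Sum>i<t. q ^ i)"
  let ?s = "\<lambda>x::'a. x ^ (q - 1)"
  have q2: "q \<ge> 2" using field_card_base_ge_2[OF card t] .
  have units: "card (UNIV - {0::'a}) = S * (q - 1)" using card_units[OF card t] by (simp add: S_def)
  have ker: "{x. x \<noteq> 0 \<and> ?s x = 1} = subF q - {0}" using power_map_kernel[of q] q2 by simp
  have upper: "card (subF q - {0::'a}) \<le> q - 1"
  proof -
    have "card (subF q - {0::'a}) \<le> card {x::'a. x ^ (q - 1) = 1}"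
      by (rule card_mono) (use ker in auto)
    also have "\<dots> \<le> q - 1" by (rule card_roots_of_unity_le) (use q2 in simp)
    finally show ?thesis .
  qed
  have "?s ` (UNIV - {0}) \<subseteq> norm1 q t"
  proof
    fix a assume "a \<in> ?s ` (UNIV - {0})"
    then obtain x where x: "x \<noteq> 0" "a = x ^ (q - 1)" by auto
    have "x ^ card (UNIV - {0::'a}) = 1"
      by (rule power_card_eq_one) (use x in auto)
    then have "a ^ S = 1" using x units by (simp add: power_mult[symmetric] mult.commute)
    then show "a \<in> norm1 q t" unfolding norm1_eq_roots[OF t] S_def by simp
  qed
  then have "card (?s ` (UNIV - {0})) \<le> card (norm1 q t :: 'a set)" by (intro card_mono) simp_all
  also have "\<dots> \<le> S" unfolding S_def by (rule card_norm1_le[OF t])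
  finally have img: "card (?s ` (UNIV - {0})) \<le> S" .
  have "S * (q - 1) = card (?s ` (UNIV - {0})) * card (subF q - {0::'a})"
    using card_units_image_kernel[of ?s] ker units by (simp add: power_mult_distrib)
  also have "\<dots> \<le> S * card (subF q - {0::'a})" using img by (rule mult_le_mono1)
  finally have "S * (q - 1) \<le> S * card (subF q - {0::'a})" .
  moreover have "S \<ge> 1" unfolding S_def by (rule sum_powers_ge_1[OF t])
  ultimately show ?thesis using upper by simp
qed

text \<open>Key counting step: a multiplicative map on \<open>F\<^sup>*\<close> whose kernel is \<open>F_q\<^sup>*\<close> has exactly
  \<open>(q ^ t - 1) / (q - 1)\<close> values; by Lagrange these are roots of unity of that order, so the
  image is the whole norm-1 group.\<close>
lemma mult_hom_image_norm1:
  fixes f :: "'a::{field,finite} \<Rightarrow> 'a"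
  assumes card: "card (UNIV :: 'a set) = q ^ t" and t: "t \<ge> 1"
    and mult: "\<And>x y. x \<noteq> 0 \<Longrightarrow> y \<noteq> 0 \<Longrightarrow> f (x * y) = f x * f y"
    and nz: "\<And>x. x \<noteq> 0 \<Longrightarrow> f x \<noteq> 0"
    and ker: "{x. x \<noteq> 0 \<and> f x = 1} = subF q - {0}"
  shows "f ` (UNIV - {0}) = norm1 q t"
proof -
  define S where "S = (\<Sum>i<t. q ^ i)"
  let ?I = "f ` (UNIV - {0})"
  have q2: "q \<ge> 2" using field_card_base_ge_2[OF card t] .
  have units: "card (UNIV - {0::'a}) = S * (q - 1)" using card_units[OF card t] by (simp add: S_def)
  have "card ?I * (q - 1) = card ?I * card (subF q - {0::'a})"
    using card_subF_units[OF card t] by simp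
  also have "\<dots> = card (UNIV - {0::'a})"
    using card_units_image_kernel[of f, OF mult nz] unfolding ker ..
  finally have "card ?I * (q - 1) = S * (q - 1)" using units by simp
  then have card_I: "card ?I = S" using q2 by simp
  have sub: "?I \<subseteq> norm1 q t"
  proof
    fix h assume h: "h \<in> ?I"
    have "h ^ card ?I = 1"
    proof (rule power_card_eq_one)
      show "0 \<notin> ?I"
      proof
        assume "0 \<in> ?I"
        then obtain x where "x \<noteq> 0" "0 = f x" by blast
        then show False using nz by metis
      qed
      show "h * g \<in> ?I" if g: "g \<in> ?I" for g
      proof -
        obtain x where x: "h = f x" "x \<in> UNIV - {0}" using h by (rule imageE)
        obtain y where y: "g = f y" "y \<in> UNIV - {0}" using g by (rule imageE)
        have "h * g = f (x * y)" using x y mult by simp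
        moreover have "x * y \<in> UNIV - {0}" using x y by simp
        ultimately show ?thesis by (rule image_eqI)
      qed
      show "finite ?I" by simp
      show "h \<in> ?I" by (rule h)
    qed
    then show "h \<in> norm1 q t" unfolding norm1_eq_roots[OF t] card_I S_def by simp
  qed
  moreover have "card (norm1 q t :: 'a set) \<le> card ?I"
    using card_norm1_le[OF t] card_I unfolding S_def by simp
  ultimately show ?thesis by (intro card_seteq) simp_all
qed

lemma power_map_image:
  assumes card: "card (UNIV :: 'a::{field,finite} set) = q ^ t" and t: "t \<ge> 1"
  shows "(\<lambda>x::'a. x ^ (q - 1)) ` (UNIV - {0}) = norm1 q t"
proof (rule mult_hom_image_norm1[OF card t])
  show "{x::'a. x \<noteq> 0 \<and> x ^ (q - 1) = 1} = subF q - {0}"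
    using field_card_base_ge_2[OF card t] by (intro power_map_kernel) simp
qed (simp_all add: power_mult_distrib)

lemma field_aut_zero:
  assumes "field_aut \<tau>"
  shows "\<tau> 0 = 0"
proof -
  have "\<tau> (0 + 0) = \<tau> 0 + \<tau> 0" using assms unfolding field_aut_def by blast
  then have "\<tau> 0 = \<tau> 0 + \<tau> 0" by (simp only: add_0_left)
  then show ?thesis by (simp only: add_cancel_right_right)
qed

lemma field_aut_nonzero:
  assumes "field_aut \<tau>" and "x \<noteq> 0"
  shows "\<tau> x \<noteq> 0"
proof -
  have "inj \<tau>" using assms(1) unfolding field_aut_def bij_def by blast
  then show ?thesis using field_aut_zero[OF assms(1)] assms(2) by (metis injD)
qed

text \<open>The parametrisation of a pseudoregulus: for an automorphism \<open>\<tau>\<close> with fixed field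
  \<open>F_q\<close>, the quotient \<open>\<tau>(l) / l\<close> (a multiplicative map with kernel \<open>F_q\<^sup>*\<close>) runs over
  the norm-1 group (Hilbert 90).\<close>
lemma aut_quotient_image:
  assumes card: "card (UNIV :: 'a::{field,finite} set) = q ^ t" and t: "t \<ge> 1"
    and aut: "field_aut \<tau>" and fix_\<tau>: "Fix \<tau> = subF q"
  shows "(\<lambda>l::'a. \<tau> l / l) ` (UNIV - {0}) = norm1 q t"
proof (rule mult_hom_image_norm1[OF card t])
  show "\<tau> (x * y) / (x * y) = \<tau> x / x * (\<tau> y / y)" for x y
    using aut unfolding field_aut_def by simp
  show "\<tau> x / x \<noteq> 0" if "x \<noteq> 0" for x
    using field_aut_nonzero[OF aut that] that by simp
  have "\<tau> x / x = 1 \<longleftrightarrow> x \<in> subF q" if "x \<noteq> 0" for x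
    using that fix_\<tau> unfolding Fix_def by (simp add: divide_eq_1_iff) blast
  then show "{x. x \<noteq> 0 \<and> \<tau> x / x = 1} = subF q - {0}" by blast
qed

lemma ppt_smult:
  assumes "(c :: 'a::field) \<noteq> 0"
  shows "ppt (smultv c u) = ppt u"
proof (intro equalityI subsetI)
  fix y assume "y \<in> ppt (smultv c u)"
  then obtain d where "d \<noteq> 0" "y = smultv (d * c) u"
    unfolding ppt_def by (auto simp: smultv_def)
  then show "y \<in> ppt u" using assms unfolding ppt_def by auto
next
  fix y assume "y \<in> ppt u"
  then obtain d where "d \<noteq> 0" "y = smultv (d / c) (smultv c u)"
    using assms unfolding ppt_def by (auto simp: smultv_def)
  then show "y \<in> ppt (smultv c u)" using assms unfolding ppt_def by auto
qed

lemma ppt_eqD: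
  assumes "ppt u = ppt (v :: 'a::field \<times> 'a)"
  shows "\<exists>c. c \<noteq> 0 \<and> u = smultv c v"
proof -
  have "u \<in> ppt u" unfolding ppt_def by (auto intro: exI[of _ 1] simp: smultv_def)
  then show ?thesis using assms unfolding ppt_def by blast
qed

lemma ppt_dehomogenise:
  assumes "(l :: 'a::field) \<noteq> 0"
  shows "ppt (l, l * a) = ppt (1, a)"
  using ppt_smult[OF assms, of "(1, a)"] by (simp add: smultv_def)

lemma mat_app_smultv: "mat_app M (smultv c u) = smultv c (mat_app M u)"
  by (cases M) (simp add: smultv_def mat_app_def algebra_simps)

lemma mat_app_addv: "mat_app M (addv u w) = addv (mat_app M u) (mat_app M w)"
  by (cases M) (simp add: addv_def mat_app_def algebra_simps)

text \<open>Product and adjugate of \<open>2 \<times> 2\<close> matrices, as far as needed to compose projectivities.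
  Since scalars act trivially on projective points, the adjugate serves as inverse.\<close>
definition mmul :: "'a::field mat2 \<Rightarrow> 'a mat2 \<Rightarrow> 'a mat2" where
  "mmul M N = (case M of (a, b, c, d) \<Rightarrow> case N of (e, f, g, h) \<Rightarrow>
      (a * e + b * g, a * f + b * h, c * e + d * g, c * f + d * h))"

definition det2 :: "'a::field mat2 \<Rightarrow> 'a" where
  "det2 M = (case M of (a, b, c, d) \<Rightarrow> a * d - b * c)"

definition adj :: "'a::field mat2 \<Rightarrow> 'a mat2" where
  "adj M = (case M of (a, b, c, d) \<Rightarrow> (d, - b, - c, a))"

lemma invertible2_det2: "invertible2 M \<longleftrightarrow> det2 M \<noteq> 0"
  by (cases M) (simp add: invertible2_def det2_def)

lemma mat_app_mmul: "mat_app (mmul M N) u = mat_app M (mat_app N u)"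
  by (cases M; cases N) (simp add: mmul_def mat_app_def algebra_simps)

lemma mat_app_adj: "mat_app (adj M) (mat_app M u) = smultv (det2 M) u"
  by (cases M) (simp add: adj_def det2_def mat_app_def smultv_def algebra_simps)

lemma invertible2_adj:
  assumes "invertible2 M"
  shows "invertible2 (adj M)"
  using assms by (cases M) (simp add: adj_def invertible2_def algebra_simps)

lemma invertible2_mmul:
  assumes "invertible2 M" and "invertible2 N"
  shows "invertible2 (mmul M N)"
proof (cases M; cases N)
  fix a b c d e f g h
  assume MN: "M = (a, b, c, d)" "N = (e, f, g, h)"
  have "(a * e + b * g) * (c * f + d * h) - (a * f + b * h) * (c * e + d * g)
      = (a * d - b * c) * (e * h - f * g)" by (simp add: algebra_simps)
  also have "\<dots> \<noteq> 0" using assms unfolding MN invertible2_def by simp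
  finally show ?thesis unfolding MN invertible2_def mmul_def by simp
qed

lemma mat_app_nonzero:
  assumes "invertible2 M" and "u \<noteq> (0, 0)"
  shows "mat_app M u \<noteq> (0, 0)"
proof
  assume "mat_app M u = (0, 0)"
  then have "smultv (det2 M) u = (0, 0)"
    using mat_app_adj[of M u] by (cases "adj M") (simp add: mat_app_def)
  then show False using assms by (simp add: invertible2_det2 smultv_def prod_eq_iff)
qed

lemma pimage_param:
  assumes nz: "\<And>l. l \<in> A \<Longrightarrow> z l \<noteq> (0, 0)"
  shows "pimage M {ppt (z l) | l. l \<in> A} = {ppt (mat_app M (z l)) | l. l \<in> A}"
proof (intro equalityI subsetI)
  fix P assume "P \<in> pimage M {ppt (z l) | l. l \<in> A}"
  then obtain u l where u: "P = ppt (mat_app M u)" "ppt u = ppt (z l)" "l \<in> A"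
    unfolding pimage_def by blast
  obtain c where "c \<noteq> 0" "u = smultv c (z l)" using ppt_eqD[OF u(2)] by blast
  then have "P = ppt (mat_app M (z l))" using u(1) by (simp add: mat_app_smultv ppt_smult)
  then show "P \<in> {ppt (mat_app M (z l)) | l. l \<in> A}" using u(3) by blast
next
  fix P assume "P \<in> {ppt (mat_app M (z l)) | l. l \<in> A}"
  then show "P \<in> pimage M {ppt (z l) | l. l \<in> A}" using nz unfolding pimage_def by blast
qed

lemma pimage_mmul:
  assumes "invertible2 N"
  shows "pimage (mmul M N) L = pimage M (pimage N L)"
proof (intro equalityI subsetI)
  fix P assume "P \<in> pimage (mmul M N) L"
  then obtain u where u: "u \<noteq> (0, 0)" "ppt u \<in> L" "P = ppt (mat_app M (mat_app N u))"
    unfolding pimage_def by (auto simp: mat_app_mmul)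
  then show "P \<in> pimage M (pimage N L)"
    using mat_app_nonzero[OF assms u(1)] unfolding pimage_def by blast
next
  fix P assume "P \<in> pimage M (pimage N L)"
  then obtain u u' where u: "u \<noteq> (0, 0)" "ppt u \<in> L" "ppt u' = ppt (mat_app N u)"
    and P: "P = ppt (mat_app M u')"
    unfolding pimage_def by blast
  obtain c where "c \<noteq> 0" "u' = smultv c (mat_app N u)" using ppt_eqD[OF u(3)] by blast
  then have "P = ppt (mat_app (mmul M N) u)"
    using P by (simp add: mat_app_smultv mat_app_mmul ppt_smult)
  then show "P \<in> pimage (mmul M N) L" using u unfolding pimage_def by blast
qed

lemma pimage_adj:
  assumes M: "invertible2 M" and pts: "\<forall>P\<in>L. \<exists>u. u \<noteq> (0, 0) \<and> P = ppt u"
  shows "pimage (adj M) (pimage M L) = L"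
proof -
  have "pimage (adj M) (pimage M L) = pimage (mmul (adj M) M) L"
    using pimage_mmul[OF M] by simp
  also have "\<dots> = L"
    using pts M unfolding pimage_def
    by (fastforce simp: mat_app_mmul mat_app_adj ppt_smult invertible2_det2)
  finally show ?thesis .
qed

lemma distinct_points_det:
  assumes w: "w \<noteq> (0, 0)" and v: "v \<noteq> (0, 0)" and wv: "ppt w \<noteq> ppt (v :: 'a::field \<times> 'a)"
  shows "fst w * snd v - snd w * fst v \<noteq> 0"
proof
  assume det: "fst w * snd v - snd w * fst v = 0"
  obtain w1 w2 v1 v2 where wv_def: "w = (w1, w2)" "v = (v1, v2)" by (cases w, cases v)
  have "\<exists>c. c \<noteq> 0 \<and> v = smultv c w"
  proof (cases "w1 = 0")
    case False
    then have "v = smultv (v1 / w1) w" and "v1 / w1 \<noteq> 0"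
      using det v unfolding wv_def smultv_def by (auto simp: field_simps)
    then show ?thesis by blast
  next
    case True
    then have "w2 \<noteq> 0" "v1 = 0" using w det unfolding wv_def by auto
    then have "v = smultv (v2 / w2) w" and "v2 / w2 \<noteq> 0"
      using True v unfolding wv_def smultv_def by auto
    then show ?thesis by blast
  qed
  then show False using wv ppt_smult by metis
qed

lemma frame_matrix:
  assumes "w \<noteq> (0, 0)" and "v \<noteq> (0, 0)" and "ppt w \<noteq> ppt (v :: 'a::field \<times> 'a)" and c: "c \<noteq> 0"
  shows "\<exists>M. invertible2 M \<and> mat_app M w = (1, 0) \<and> mat_app M v = (0, c)"
proof -
  obtain w1 w2 v1 v2 where wv_def: "w = (w1, w2)" "v = (v1, v2)" by (cases w, cases v)
  define D where "D = w1 * v2 - w2 * v1"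
  have D: "D \<noteq> 0" using distinct_points_det[OF assms(1-3)] unfolding D_def wv_def by simp
  define M where "M = (v2 / D, - v1 / D, - c * w2 / D, c * w1 / D)"
  have "invertible2 M" "mat_app M w = (1, 0)" "mat_app M v = (0, c)"
    using D c unfolding M_def wv_def invertible2_def mat_app_def
    by (simp_all add: field_simps, simp_all add: D_def algebra_simps)
  then show ?thesis by blast
qed

lemma dehomogenised_points:
  "{ppt (l, l * f l) | l :: 'a::field. l \<noteq> 0} = {ppt (1, a) | a. a \<in> f ` (UNIV - {0})}"
proof (intro equalityI subsetI)
  fix P assume "P \<in> {ppt (l, l * f l) | l. l \<noteq> 0}"
  then obtain l where l: "l \<noteq> 0" "P = ppt (l, l * f l)" by blast
  then have "P = ppt (1, f l)" by (simp add: ppt_dehomogenise)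
  then show "P \<in> {ppt (1, a) | a. a \<in> f ` (UNIV - {0})}" using l(1) by blast
next
  fix P assume "P \<in> {ppt (1, a) | a. a \<in> f ` (UNIV - {0})}"
  then obtain l where l: "l \<noteq> 0" "P = ppt (1, f l)" by blast
  then have "P = ppt (l, l * f l)" by (simp add: ppt_dehomogenise)
  then show "P \<in> {ppt (l, l * f l) | l. l \<noteq> 0}" using l(1) by blast
qed

lemma frobenius_points:
  assumes card: "card (UNIV :: 'a::{field,finite} set) = q ^ t" and t: "t \<ge> 1"
  shows "{ppt (x, x ^ q) | x :: 'a. x \<noteq> 0} = {ppt (1, a) | a. a \<in> norm1 q t}"
proof -
  have "x ^ q = x * x ^ (q - 1)" for x :: 'a
    using field_card_base_ge_2[OF card t] by (cases q) auto
  then have "{ppt (x, x ^ q) | x :: 'a. x \<noteq> 0} = {ppt (x, x * x ^ (q - 1)) | x :: 'a. x \<noteq> 0}"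
    by simp
  also have "\<dots> = {ppt (1, a) | a. a \<in> norm1 q t}"
    unfolding dehomogenised_points power_map_image[OF card t] ..
  finally show ?thesis .
qed

text \<open>Normal form of a pseudoregulus: the frame sending the transversal points to
  \<open>\<langle>(1,0)\<rangle>\<close>, \<open>\<langle>(0,1)\<rangle>\<close> and absorbing \<open>\<rho>\<close> maps \<open>\<langle>\<lambda> w + \<rho> \<lambda>\<^sup>\<tau> v\<rangle>\<close> to \<open>\<langle>(\<lambda>, \<lambda>\<^sup>\<tau>)\<rangle>\<close>,
  i.e. to \<open>\<langle>(1, \<lambda>\<^sup>\<tau> / \<lambda>)\<rangle>\<close>, and these quotients exhaust the norm-1 group.\<close>
lemma pseudoregulus_normal_form:
  assumes card: "card (UNIV :: 'a::{field,finite} set) = q ^ t" and t: "t \<ge> 1"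
    and ps: "pseudoregulus q (L :: ('a \<times> 'a) set set)"
  shows "\<exists>M. invertible2 M \<and> pimage M L = {ppt (1, a) | a. a \<in> norm1 q t}"
    and "\<forall>P\<in>L. \<exists>u. u \<noteq> (0, 0) \<and> P = ppt u"
proof -
  obtain w v \<rho> \<tau> where wv: "w \<noteq> (0, 0)" "v \<noteq> (0, 0)" "ppt w \<noteq> ppt v"
    and aut: "field_aut \<tau>" and fix_\<tau>: "Fix \<tau> = subF q" and \<rho>: "\<rho> \<noteq> 0"
    and L: "L = linset_pr w v \<rho> \<tau>"
    using ps unfolding pseudoregulus_def by blast
  obtain M where M: "invertible2 M" "mat_app M w = (1, 0)" "mat_app M v = (0, inverse \<rho>)"
    using frame_matrix[OF wv, of "inverse \<rho>"] \<rho> by auto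
  define z where "z l = addv (smultv l w) (smultv (\<rho> * \<tau> l) v)" for l
  have Mz: "mat_app M (z l) = (l, l * (\<tau> l / l))" if "l \<noteq> 0" for l
    unfolding z_def mat_app_addv mat_app_smultv M(2,3)
    using \<rho> that by (simp add: smultv_def addv_def)
  have z_nz: "z l \<noteq> (0, 0)" if "l \<noteq> 0" for l
    using Mz[OF that] that by (cases M) (auto simp: mat_app_def)
  have L_param: "L = {ppt (z l) | l. l \<in> UNIV - {0}}" unfolding L linset_pr_def z_def by simp
  have "pimage M L = {ppt (mat_app M (z l)) | l. l \<in> UNIV - {0}}"
    unfolding L_param using z_nz by (intro pimage_param) simp
  also have "\<dots> = {ppt (l, l * (\<tau> l / l)) | l. l \<noteq> 0}" using Mz by force
  also have "\<dots> = {ppt (1, a) | a. a \<in> norm1 q t}"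
    unfolding dehomogenised_points aut_quotient_image[OF card t aut fix_\<tau>] ..
  finally show "\<exists>M. invertible2 M \<and> pimage M L = {ppt (1, a) | a. a \<in> norm1 q t}"
    using M(1) by blast
  show "\<forall>P\<in>L. \<exists>u. u \<noteq> (0, 0) \<and> P = ppt u" using L_param z_nz by blast
qed

lemma pseudoregulus_equivalent:
  assumes card: "card (UNIV :: 'a::{field,finite} set) = q ^ t" and t: "t \<ge> 1"
    and ps1: "pseudoregulus q (L1 :: ('a \<times> 'a) set set)" and ps2: "pseudoregulus q L2"
  shows "\<exists>M. invertible2 M \<and> pimage M L1 = L2"
proof -
  obtain M1 M2 where M1: "invertible2 M1" and M2: "invertible2 M2"
    and same: "pimage M1 L1 = pimage M2 L2"
    using pseudoregulus_normal_form(1)[OF card t ps1] pseudoregulus_normal_form(1)[OF card t ps2]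
    by metis
  have "pimage (mmul (adj M2) M1) L1 = pimage (adj M2) (pimage M2 L2)"
    using pimage_mmul[OF M1] same by simp
  also have "\<dots> = L2" using pimage_adj[OF M2 pseudoregulus_normal_form(2)[OF card t ps2]] .
  finally show ?thesis using invertible2_mmul[OF invertible2_adj[OF M2] M1] by blast
qed

theorem mainTheorem10:
  fixes q t :: nat
  assumes card: "card (UNIV :: 'a::{field,finite} set) = q ^ t" and t2: "t \<ge> 2"
  shows "(\<forall>L :: ('a \<times> 'a) set set. pseudoregulus q L \<longrightarrow>
            (\<exists>M. invertible2 M \<and> pimage M L = {ppt (x, x ^ q) | x. x \<noteq> 0}))
       \<and> {ppt (x, x ^ q) | x :: 'a. x \<noteq> 0} = {ppt (1, a) | a :: 'a. a \<noteq> 0 \<and> normF q t a = 1}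
       \<and> (\<forall>L1 L2 :: ('a \<times> 'a) set set. pseudoregulus q L1 \<and> pseudoregulus q L2 \<longrightarrow>
            (\<exists>M. invertible2 M \<and> pimage M L1 = L2))"
proof -
  have t: "t \<ge> 1" using t2 by simp
  have frob: "{ppt (x, x ^ q) | x :: 'a. x \<noteq> 0} = {ppt (1, a) | a. a \<in> norm1 q t}"
    by (rule frobenius_points[OF card t])
  show ?thesis
  proof (intro conjI allI impI)
    fix L :: "('a \<times> 'a) set set" assume "pseudoregulus q L"
    then show "\<exists>M. invertible2 M \<and> pimage M L = {ppt (x, x ^ q) | x. x \<noteq> 0}"
      unfolding frob by (rule pseudoregulus_normal_form(1)[OF card t])
  next
    show "{ppt (x, x ^ q) | x :: 'a. x \<noteq> 0} = {ppt (1, a) | a. a \<noteq> 0 \<and> normF q t a = 1}"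
      unfolding frob norm1_def by simp
  next
    fix L1 L2 :: "('a \<times> 'a) set set" assume "pseudoregulus q L1 \<and> pseudoregulus q L2"
    then show "\<exists>M. invertible2 M \<and> pimage M L1 = L2"
      using pseudoregulus_equivalent[OF card t] by blast
  qed
qed
end
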